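(* For $D=(\mu,\mathcal{A},\mathcal{B},\mathcal{F})\in\mathcal{BV}(\Omega)$ let $\Theta_D:=\frac{|\mathcal{B}|^2}{1-|\mu|^2}\,dx\,dy$. Then: (i) for every gauge $\phi$ on $\Omega$ and every $D\in\mathcal{BV}(\Omega)$, $\Theta_{\phi\cdot D}=\Theta_D$ on $\Omega$; (ii) for every diffeomorphism $\Phi:\Omega_1\to\Omega_2$ and every $D\in\mathcal{BV}(\Omega_2)$, $\Theta_{\Phi^*D}=\Phi^*\Theta_D$ on $\Omega_1$, where for a 2-form $f\,dx\,dy$ on $\Omega_2$ its pullback is $\Phi^*(f\,dx\,dy)=(f\circ\Phi)\,J\,dx\,dy$ with $J=|\Phi_z|^2-|\Phi_{\bar z}|^2$.
   Context: A domain is an open connected subset of $\mathbb{C}$, $z=x+iy$. $\mathcal{BV}(\Omega)$ is the set of quadruples $(\mu,\mathcal{A},\mathcal{B},\mathcal{F})$ of continuous complex functions on $\Omega$ with $|\mu|<1$ pointwise (encoding $w_{\bar z}-\mu w_z+\mathcal{A}w+\mathcal{B}\bar w=\mathcal{F}$). Gauge action: for a $C^1$ nowhere-vanishing $\phi$ on $\Omega$, $\phi\cdot(\mu,\mathcal{A},\mathcal{B},\mathcal{F})=(\mu,\ \mathcal{A}-\phi_{\bar z}/\phi+\mu\phi_z/\phi,\ \mathcal{B}\phi/\bar\phi,\ \phi\mathcal{F})$. Diffeomorphism: $C^1$ bijection $\Phi:\Omega_1\to\Omega_2$ with $C^1$ inverse and $J=|\Phi_z|^2-|\Phi_{\bar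 z}|^2>0$; for $D\in\mathcal{BV}(\Omega_2)$, with $K=\Phi_z+(\mu\circ\Phi)\overline{\Phi_{\bar z}}$ (nowhere zero), $\Phi^*D=((\Phi_{\bar z}+(\mu\circ\Phi)\overline{\Phi_z})/K,\ J(\mathcal{A}\circ\Phi)/K,\ J(\mathcal{B}\circ\Phi)/K,\ J(\mathcal{F}\circ\Phi)/K)$. *)

theory Defs
  imports "HOL-Analysis.Analysis"
begin

definition pdx :: "(complex \<Rightarrow> complex) \<Rightarrow> complex \<Rightarrow> complex" where
  "pdx f z = frechet_derivative f (at z) 1"

definition pdy :: "(complex \<Rightarrow> complex) \<Rightarrow> complex \<Rightarrow> complex" where
  "pdy f z = frechet_derivative f (at z) \<i>"

definition Wz :: "(complex \<Rightarrow> complex) \<Rightarrow> complex \<Rightarrow> complex" where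
  "Wz f z = (pdx f z - \<i> * pdy f z) / 2"

definition Wzb :: "(complex \<Rightarrow> complex) \<Rightarrow> complex \<Rightarrow> complex" where
  "Wzb f z = (pdx f z + \<i> * pdy f z) / 2"

definition C1_on :: "complex set \<Rightarrow> (complex \<Rightarrow> complex) \<Rightarrow> bool" where
  "C1_on S f \<longleftrightarrow> (\<forall>z\<in>S. f differentiable (at z)) \<and>
     continuous_on S (pdx f) \<and> continuous_on S (pdy f)"

definition domain :: "complex set \<Rightarrow> bool" where
  "domain S \<longleftrightarrow> open S \<and> connected S \<and> S \<noteq> {}"

datatype BVdata = BVD (mu: "complex \<Rightarrow> complex") (AA: "complex \<Rightarrow> complex")
  (BB: "complex \<Rightarrow> complex") (FF: "complex \<Rightarrow> complex")

definition BV :: "complex set \<Rightarrow> BVdata \<Rightarrow> bool" where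
  "BV S D \<longleftrightarrow> continuous_on S (mu D) \<and> continuous_on S (AA D) \<and>
     continuous_on S (BB D) \<and> continuous_on S (FF D) \<and> (\<forall>z\<in>S. cmod (mu D z) < 1)"

definition is_gauge :: "complex set \<Rightarrow> (complex \<Rightarrow> complex) \<Rightarrow> bool" where
  "is_gauge S \<phi> \<longleftrightarrow> C1_on S \<phi> \<and> (\<forall>z\<in>S. \<phi> z \<noteq> 0)"

definition gauge_act :: "(complex \<Rightarrow> complex) \<Rightarrow> BVdata \<Rightarrow> BVdata" where
  "gauge_act \<phi> D = BVD (mu D)
     (\<lambda>z. AA D z - Wzb \<phi> z / \<phi> z + mu D z * Wz \<phi> z / \<phi> z)
     (\<lambda>z. BB D z * \<phi> z / cnj (\<phi> z))
     (\<lambda>z. \<phi> z * FF D z)"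

definition Jac :: "(complex \<Rightarrow> complex) \<Rightarrow> complex \<Rightarrow> real" where
  "Jac \<Phi> z = (cmod (Wz \<Phi> z))\<^sup>2 - (cmod (Wzb \<Phi> z))\<^sup>2"

definition diffeo :: "complex set \<Rightarrow> complex set \<Rightarrow> (complex \<Rightarrow> complex) \<Rightarrow> bool" where
  "diffeo S1 S2 \<Phi> \<longleftrightarrow> bij_betw \<Phi> S1 S2 \<and> C1_on S1 \<Phi> \<and> C1_on S2 (inv_into S1 \<Phi>) \<and>
     (\<forall>z\<in>S1. Jac \<Phi> z > 0)"

definition pullback :: "(complex \<Rightarrow> complex) \<Rightarrow> BVdata \<Rightarrow> BVdata" where
  "pullback \<Phi> D = (let K = (\<lambda>z. Wz \<Phi> z + mu D (\<Phi> z) * cnj (Wzb \<Phi> z)) in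
     BVD (\<lambda>z. (Wzb \<Phi> z + mu D (\<Phi> z) * cnj (Wz \<Phi> z)) / K z)
         (\<lambda>z. of_real (Jac \<Phi> z) * AA D (\<Phi> z) / K z)
         (\<lambda>z. of_real (Jac \<Phi> z) * BB D (\<Phi> z) / K z)
         (\<lambda>z. of_real (Jac \<Phi> z) * FF D (\<Phi> z) / K z))"

text \<open>A 2-form f dx dy is represented by its coefficient function f.\<close>
definition Theta :: "BVdata \<Rightarrow> complex \<Rightarrow> real" where
  "Theta D z = (cmod (BB D z))\<^sup>2 / (1 - (cmod (mu D z))\<^sup>2)"

definition pull2 :: "(complex \<Rightarrow> complex) \<Rightarrow> (complex \<Rightarrow> real) \<Rightarrow> complex \<Rightarrow> real" where
  "pull2 \<Phi> f z = f (\<Phi> z) * Jac \<Phi> z"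

end

theory Submission
  imports Defs
begin

text \<open>Both claims are pointwise algebra. A gauge multiplies B by phi / cnj phi, which has
  modulus 1, and leaves mu unchanged. For a pullback put a = Wz Phi, b = Wzb Phi, m = mu o Phi and
  K = a + m cnj b: the identity |a + m cnj b|^2 - |b + m cnj a|^2 = J (1 - |m|^2) gives
  1 - |mu'|^2 = J (1 - |m|^2) / |K|^2, while |B'|^2 = J^2 |B o Phi|^2 / |K|^2, so |K|^2 cancels
  and one factor J remains.\<close>

lemma norm_add_mult_cnj_diff:
  fixes a b m :: complex
  shows "(cmod (a + m * cnj b))\<^sup>2 - (cmod (b + m * cnj a))\<^sup>2
         = ((cmod a)\<^sup>2 - (cmod b)\<^sup>2) * (1 - (cmod m)\<^sup>2)"
  unfolding cmod_power2 by (simp add: algebra_simps power2_eq_square)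

lemma norm_pullback_density:
  fixes a b m B :: complex and J :: real
  assumes J: "J = (cmod a)\<^sup>2 - (cmod b)\<^sup>2" "J > 0" and m: "cmod m < 1"
  shows "(cmod (of_real J * B / (a + m * cnj b)))\<^sup>2 /
          (1 - (cmod ((b + m * cnj a) / (a + m * cnj b)))\<^sup>2)
        = (cmod B)\<^sup>2 / (1 - (cmod m)\<^sup>2) * J"
proof -
  define k where "k = (cmod (a + m * cnj b))\<^sup>2"
  define c where "c = (cmod (b + m * cnj a))\<^sup>2"
  have m2: "(cmod m)\<^sup>2 < 1"
    using m by (simp add: abs_square_less_1)
  have k_minus_c: "k - c = J * (1 - (cmod m)\<^sup>2)"
    using norm_add_mult_cnj_diff[of a m b] J(1) unfolding k_def c_def by simp
  then have "k - c > 0"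
    using J(2) m2 by simp
  then have "k > 0"
    unfolding c_def by (smt (verit) zero_le_power2)
  have "(cmod (of_real J * B / (a + m * cnj b)))\<^sup>2 = J\<^sup>2 * (cmod B)\<^sup>2 / k"
    unfolding k_def by (simp add: norm_mult norm_divide power_mult_distrib power_divide)
  moreover have "(cmod ((b + m * cnj a) / (a + m * cnj b)))\<^sup>2 = c / k"
    unfolding k_def c_def by (simp add: norm_divide power_divide)
  ultimately have "(cmod (of_real J * B / (a + m * cnj b)))\<^sup>2 /
      (1 - (cmod ((b + m * cnj a) / (a + m * cnj b)))\<^sup>2) = J\<^sup>2 * (cmod B)\<^sup>2 / k / (1 - c / k)"
    by simp
  also have "\<dots> = J\<^sup>2 * (cmod B)\<^sup>2 / (k - c)"
    using \<open>k > 0\<close> by (simp add: field_simps)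
  also have "\<dots> = (cmod B)\<^sup>2 / (1 - (cmod m)\<^sup>2) * J"
    unfolding k_minus_c using J(2) m2 by (simp add: field_simps power2_eq_square)
  finally show ?thesis .
qed

lemma Theta_gauge_act:
  assumes "\<phi> z \<noteq> 0"
  shows "Theta (gauge_act \<phi> D) z = Theta D z"
  using assms by (simp add: Theta_def gauge_act_def norm_mult norm_divide)

lemma Theta_pullback:
  assumes "Jac \<Phi> z > 0" and "cmod (mu D (\<Phi> z)) < 1"
  shows "Theta (pullback \<Phi> D) z = pull2 \<Phi> (Theta D) z"
  unfolding Theta_def pullback_def pull2_def Let_def BVdata.sel
  by (rule norm_pullback_density[OF Jac_def assms])

theorem theorem8p2:
  shows "(\<forall>\<Omega> \<phi> D. domain \<Omega> \<longrightarrow> is_gauge \<Omega> \<phi> \<longrightarrow> BV \<Omega> D \<longrightarrow>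
            (\<forall>z\<in>\<Omega>. Theta (gauge_act \<phi> D) z = Theta D z)) \<and>
         (\<forall>\<Omega>1 \<Omega>2 \<Phi> D. domain \<Omega>1 \<longrightarrow> domain \<Omega>2 \<longrightarrow> diffeo \<Omega>1 \<Omega>2 \<Phi> \<longrightarrow> BV \<Omega>2 D \<longrightarrow>
            (\<forall>z\<in>\<Omega>1. Theta (pullback \<Phi> D) z = pull2 \<Phi> (Theta D) z))"
proof (intro conjI allI impI ballI)
  fix \<Omega> \<phi> D z
  assume "is_gauge \<Omega> \<phi>" "z \<in> \<Omega>"
  then show "Theta (gauge_act \<phi> D) z = Theta D z"
    by (intro Theta_gauge_act) (simp add: is_gauge_def)
next
  fix \<Omega>1 \<Omega>2 \<Phi> D z
  assume diffeo: "diffeo \<Omega>1 \<Omega>2 \<Phi>" and bv: "BV \<Omega>2 D" and z: "z \<in> \<Omega>1"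
  have "\<Phi> z \<in> \<Omega>2"
    using diffeo z by (auto simp: diffeo_def bij_betw_def)
  then have "cmod (mu D (\<Phi> z)) < 1"
    using bv by (simp add: BV_def)
  moreover have "Jac \<Phi> z > 0"
    using diffeo z by (simp add: diffeo_def)
  ultimately show "Theta (pullback \<Phi> D) z = pull2 \<Phi> (Theta D) z"
    by (intro Theta_pullback)
qed

end
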